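(* Let $k\ge 2$ and let $p_1,\dots,p_k\ge 2$ be integers. If $W=C_{p_k}\wr C_{p_{k-1}}\wr\cdots\wr C_{p_1}$, then $cw(W)=1$.
   Context: $C_p$ denotes the cyclic group of order $p$ acting on $\{1,\dots,p\}$ by the shift $(1,2,\dots,p)$; $\wr$ denotes the permutational wreath product ($H\wr G=H^X\rtimes G$ for $G$ acting on $X$), which is associative. The commutator width $cw(G)$ is the maximum, over elements $g$ of the derived subgroup $G'$, of the least number of commutators whose product is $g$. *)

theory Defs
  imports "HOL-Algebra.Algebra" "HOL-Library.Extended_Nat"
begin

definition comm_length :: "('a, 'b) monoid_scheme \<Rightarrow> 'a \<Rightarrow> nat" where
  "comm_length G g = (LEAST n. \<exists>cs. length cs = n \<and> set cs \<subseteq> derived_set G (carrier G)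
                                   \<and> g = foldr (\<otimes>\<^bsub>G\<^esub>) cs \<one>\<^bsub>G\<^esub>)"

definition commutator_width :: "('a, 'b) monoid_scheme \<Rightarrow> enat" where
  "commutator_width G = (SUP g \<in> derived G (carrier G). enat (comm_length G g))"

definition cyc_perms :: "nat \<Rightarrow> (nat \<Rightarrow> nat) set" where
  "cyc_perms p = {(\<lambda>y\<in>{0..<p}. (y + i) mod p) | i. i < p}"

(* Points of the imprimitive action of H wr G: pairs (x,y), x in Xs, y in Y, encoded as x @ [y] *)
definition wr_points :: "nat set \<Rightarrow> nat list set \<Rightarrow> nat list set" where
  "wr_points Y Xs = {append x [y] | x y. x \<in> Xs \<and> y \<in> Y}"

(* Permutational wreath product H wr G = H^Xs \<rtimes> G (G acting on Xs, H acting on Y),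
   realised by its faithful imprimitive action on Xs \<times> Y: (x,y) \<mapsto> (g x, f(x) y). *)
definition wr_perm :: "(nat \<Rightarrow> nat) set \<Rightarrow> nat set \<Rightarrow> (nat list \<Rightarrow> nat list) set
                         \<Rightarrow> nat list set \<Rightarrow> (nat list \<Rightarrow> nat list) set" where
  "wr_perm H Y G Xs =
     {(\<lambda>z\<in>wr_points Y Xs. g (butlast z) @ [f (butlast z) (last z)]) | g f. g \<in> G \<and> f \<in> Xs \<rightarrow> H}"

(* wr_aux [q_1,...,q_m] = C_{q_1} wr (C_{q_2} wr ( ... wr (C_{q_m} wr 1))) with its point set *)
fun wr_aux :: "nat list \<Rightarrow> (nat list \<Rightarrow> nat list) set \<times> nat list set" where
  "wr_aux [] = ({(\<lambda>z\<in>{[]}. z)}, {[]})"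
| "wr_aux (p # qs) = (case wr_aux qs of (G, Xs) \<Rightarrow>
       (wr_perm (cyc_perms p) {0..<p} G Xs, wr_points {0..<p} Xs))"

(* iter_wreath [p_1,...,p_k] = C_{p_k} wr C_{p_{k-1}} wr ... wr C_{p_1}, as a permutation group *)
definition iter_wreath :: "nat list \<Rightarrow> (nat list \<Rightarrow> nat list) monoid" where
  "iter_wreath ps = (BijGroup (snd (wr_aux (rev ps)))) \<lparr>carrier := fst (wr_aux (rev ps))\<rparr>"

end

theory Submission
  imports Defs
begin

text \<open>
  For a permutation group \<open>G\<close> on \<open>S\<close> consider the property that every element of \<open>G'\<close> is a
  single commutator \<open>[a, b]\<close> with \<open>a, b \<in> G\<close> and \<open>b\<close> a full cycle on \<open>S\<close>. It passes from \<open>G\<close>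
  to \<open>C\<^sub>n \<wr> G\<close>. An element \<open>(g, i)\<close> of the derived subgroup of \<open>C\<^sub>n \<wr> G\<close> has \<open>g \<in> G'\<close> and
  base sum \<open>\<Sum>i \<equiv> 0 (mod n)\<close>. Write \<open>g = [a, b]\<close> with \<open>b\<close> a full cycle; then \<open>b\<close> lifts to a
  full cycle \<open>(b, v)\<close> on \<open>S \<times> C\<^sub>n\<close>, and \<open>[(a, u), (b, v)] = (g, i)\<close> becomes the difference
  equation \<open>u \<circ> b - u = h\<close> modulo \<open>n\<close>, with \<open>\<Sum>h = \<Sum>i\<close>. Summing \<open>h\<close> along the cycle of \<open>b\<close>
  solves it, precisely because \<open>\<Sum>h \<equiv> 0\<close>. Starting from the trivial group this gives \<open>cw \<le> 1\<close>
  for every iterated wreath product of cyclic groups; with at least two factors the derived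
  subgroup is nontrivial, so \<open>cw = 1\<close>.
\<close>

section \<open>Commutator width\<close>

lemma (in group) comm_length_le_1:
  assumes "g \<in> derived_set G (carrier G)"
  shows "comm_length G g \<le> 1"
proof -
  have "g \<in> carrier G" using assms derived_set_in_carrier by blast
  then have "g = foldr (\<otimes>) [g] \<one>" by simp
  with assms show ?thesis
    unfolding comm_length_def by (intro Least_le exI[of _ "[g]"]) simp
qed

lemma (in group) comm_length_eq_1:
  assumes "g \<in> derived_set G (carrier G)" and "g \<noteq> \<one>"
  shows "comm_length G g = 1"
proof -
  have "comm_length G g \<noteq> 0"
  proof
    assume "comm_length G g = 0"
    moreover have "\<exists>cs. length cs = comm_length G g \<and> set cs \<subseteq> derived_set G (carrier G)
                       \<and> g = foldr (\<otimes>) cs \<one>"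
      unfolding comm_length_def
    proof (rule LeastI_ex)
      have "g \<in> carrier G" using assms(1) derived_set_in_carrier by blast
      then show "\<exists>n cs. length cs = n \<and> set cs \<subseteq> derived_set G (carrier G) \<and> g = foldr (\<otimes>) cs \<one>"
        using assms(1) by (intro exI[of _ 1] exI[of _ "[g]"]) simp
    qed
    ultimately show False using assms(2) by simp
  qed
  then show ?thesis using comm_length_le_1[OF assms(1)] by simp
qed

lemma (in group) commutator_width_eq_1:
  assumes "derived G (carrier G) \<subseteq> derived_set G (carrier G)"
    and "derived G (carrier G) \<noteq> {\<one>}"
  shows "commutator_width G = 1"
proof -
  have "\<one> \<in> derived G (carrier G)" unfolding derived_def by (rule generate.one)
  then obtain \<tau> where \<tau>: "\<tau> \<in> derived G (carrier G)" "\<tau> \<noteq> \<one>" using assms(2) by blast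
  show ?thesis
    unfolding commutator_width_def
  proof (rule antisym)
    show "(SUP g\<in>derived G (carrier G). enat (comm_length G g)) \<le> 1"
      using assms(1) comm_length_le_1 by (intro SUP_least) (auto simp: one_enat_def)
    have "comm_length G \<tau> = 1" using comm_length_eq_1 \<tau> assms(1) by blast
    then have "enat (comm_length G \<tau>) = 1" by (simp add: one_enat_def)
    then show "1 \<le> (SUP g\<in>derived G (carrier G). enat (comm_length G g))"
      using SUP_upper[OF \<tau>(1), of "\<lambda>g. enat (comm_length G g)"] by simp
  qed
qed

section \<open>Permutations and full cycles\<close>

lemma sum_Bij_reindex:
  fixes f :: "'a \<Rightarrow> 'b::comm_monoid_add"
  shows "g \<in> Bij S \<Longrightarrow> (\<Sum>x\<in>S. f (g x)) = (\<Sum>x\<in>S. f x)"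
  by (rule sum.reindex_bij_betw) (simp add: Bij_def)

lemma BijGroup_mult: "g \<in> Bij S \<Longrightarrow> h \<in> Bij S \<Longrightarrow> g \<otimes>\<^bsub>BijGroup S\<^esub> h = compose S g h"
  by (simp add: BijGroup_def)

lemma BijGroup_one: "\<one>\<^bsub>BijGroup S\<^esub> = (\<lambda>x\<in>S. x)"
  by (simp add: BijGroup_def)

lemma BijGroup_carrier: "carrier (BijGroup S) = Bij S"
  by (simp add: BijGroup_def)

lemma Bij_apply_closed: "g \<in> Bij S \<Longrightarrow> x \<in> S \<Longrightarrow> g x \<in> S"
  using Bij_imp_funcset by blast

lemma Bij_inv_closed: "g \<in> Bij S \<Longrightarrow> inv\<^bsub>BijGroup S\<^esub> g \<in> Bij S"
  using group.inv_closed[OF group_BijGroup] by (simp add: BijGroup_carrier)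

lemma Bij_inv_apply_left: "g \<in> Bij S \<Longrightarrow> x \<in> S \<Longrightarrow> (inv\<^bsub>BijGroup S\<^esub> g) (g x) = x"
  using bij_betw_inv_into_left[of g S S x] by (simp add: inv_BijGroup Bij_apply_closed Bij_def)

lemma Bij_inv_apply_right: "g \<in> Bij S \<Longrightarrow> x \<in> S \<Longrightarrow> g ((inv\<^bsub>BijGroup S\<^esub> g) x) = x"
  using bij_betw_inv_into_right[of g S S x] by (simp add: inv_BijGroup Bij_def)

definition full_cycle_on :: "'a set \<Rightarrow> ('a \<Rightarrow> 'a) \<Rightarrow> bool" where
  "full_cycle_on S b \<longleftrightarrow>
     (\<exists>e N. 0 < N \<and> bij_betw e {..<N} S \<and> (\<forall>k<N. b (e k) = e (Suc k mod N)))"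

lemma full_cycle_on_fixpoint:
  assumes "full_cycle_on S b" "x \<in> S" "b x = x"
  shows "S = {x}"
proof -
  obtain e N where N: "0 < N" and e: "bij_betw e {..<N} S" and cyc: "\<forall>k<N. b (e k) = e (Suc k mod N)"
    using assms(1) unfolding full_cycle_on_def by blast
  have S: "S = e ` {..<N}" using e by (simp add: bij_betw_def)
  then obtain k where k: "k < N" "e k = x" using assms(2) by blast
  have "e (Suc k mod N) = b (e k)" using cyc k(1) by simp
  also have "\<dots> = e k" using k(2) assms(3) by simp
  finally have "Suc k mod N = k"
    by (rule inj_onD[OF bij_betw_imp_inj_on[OF e]]) (use N k(1) in auto)
  moreover have "Suc k = N"
  proof (rule ccontr)
    assume "Suc k \<noteq> N"
    then have "Suc k mod N = Suc k" using k(1) by simp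
    then show False using \<open>Suc k mod N = k\<close> by simp
  qed
  ultimately have "N = Suc k \<and> k = 0" by auto
  then show ?thesis using S k by auto
qed

text \<open>\<open>u\<close> is the partial sum of \<open>h\<close> along the cycle; only the step that closes the cycle is off,
  by the total sum of \<open>h\<close>.\<close>
lemma full_cycle_on_coboundary:
  fixes h :: "'a \<Rightarrow> int"
  assumes "full_cycle_on S b" and "n dvd (\<Sum>y\<in>S. h y)"
  shows "\<exists>u. \<forall>y\<in>S. (u (b y) - u y) mod n = h y mod n"
proof -
  obtain e N where N: "0 < N" and e: "bij_betw e {..<N} S" and cyc: "\<forall>k<N. b (e k) = e (Suc k mod N)"
    using assms(1) unfolding full_cycle_on_def by blast
  define idx where "idx = inv_into {..<N} e"
  define u where "u y = (\<Sum>j<idx y. h (e j))" for y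
  have u_e: "u (e k) = (\<Sum>j<k. h (e j))" if "k < N" for k
    using e that by (simp add: u_def idx_def bij_betw_inv_into_left)
  have total: "(\<Sum>j<N. h (e j)) = (\<Sum>y\<in>S. h y)"
    by (rule sum.reindex_bij_betw[OF e])
  have "(u (b (e k)) - u (e k)) mod n = h (e k) mod n" if k: "k < N" for k
  proof (cases "Suc k < N")
    case True
    then show ?thesis using cyc k by (simp add: u_e)
  next
    case False
    then have "Suc k = N" using k by simp
    have "b (e k) = e 0" using cyc k \<open>Suc k = N\<close> by (metis mod_self)
    then have "u (b (e k)) = 0" using N by (simp add: u_e)
    moreover have "(\<Sum>j<N. h (e j)) = u (e k) + h (e k)" using k \<open>Suc k = N\<close> by (auto simp: u_e)
    ultimately have "u (b (e k)) - u (e k) = h (e k) - (\<Sum>y\<in>S. h y)"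
      using total by simp
    moreover obtain c where "(\<Sum>y\<in>S. h y) = n * c" using assms(2) by (elim dvdE)
    ultimately have "u (b (e k)) - u (e k) = h (e k) + (- c) * n" by simp
    then show ?thesis by (simp only: mod_mult_self1)
  qed
  moreover have "S = e ` {..<N}" using e by (simp add: bij_betw_def)
  ultimately show ?thesis by blast
qed

lemma full_cycle_on_nonempty: "full_cycle_on S b \<Longrightarrow> S \<noteq> {}"
  unfolding full_cycle_on_def bij_betw_def by auto

section \<open>The wreath product \<open>C\<^sub>n \<wr> G\<close>\<close>

lemma wr_points_iff: "z \<in> wr_points Y S \<longleftrightarrow> z \<noteq> [] \<and> butlast z \<in> S \<and> last z \<in> Y"
proof
  assume "z \<noteq> [] \<and> butlast z \<in> S \<and> last z \<in> Y"
  moreover from this have "z = butlast z @ [last z]" by simp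
  ultimately show "z \<in> wr_points Y S" unfolding wr_points_def by blast
qed (auto simp: wr_points_def)

lemma wr_points_append [simp]: "x @ [y] \<in> wr_points Y S \<longleftrightarrow> x \<in> S \<and> y \<in> Y"
  by (simp add: wr_points_iff)

lemma wr_pointsE:
  assumes "z \<in> wr_points Y S"
  obtains x y where "z = x @ [y]" "x \<in> S" "y \<in> Y"
  using assms unfolding wr_points_def by blast

text \<open>The element \<open>(g, i)\<close> of \<open>C\<^sub>n \<wr> G\<close>, acting by \<open>x @ [y] \<mapsto> g x @ [y + i x]\<close>; the base
  values are integers, significant only modulo \<open>n\<close>.\<close>
definition wr_elem :: "nat \<Rightarrow> nat list set \<Rightarrow> (nat list \<Rightarrow> nat list) \<Rightarrow> (nat list \<Rightarrow> int)
                        \<Rightarrow> nat list \<Rightarrow> nat list" where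
  "wr_elem n S g i =
     (\<lambda>z\<in>wr_points {0..<n} S. g (butlast z) @ [nat ((int (last z) + i (butlast z)) mod int n)])"

definition wr_group :: "nat \<Rightarrow> nat list set \<Rightarrow> (nat list \<Rightarrow> nat list) set
                         \<Rightarrow> (nat list \<Rightarrow> nat list) set" where
  "wr_group n S G = {wr_elem n S g i | g i. g \<in> G}"

lemma wr_elem_in_wr_group: "g \<in> G \<Longrightarrow> wr_elem n S g i \<in> wr_group n S G"
  unfolding wr_group_def by blast

lemma wr_elem_append:
  "x \<in> S \<Longrightarrow> y < n \<Longrightarrow> wr_elem n S g i (x @ [y]) = g x @ [nat ((int y + i x) mod int n)]"
  by (simp add: wr_elem_def)

lemma wr_elem_eqI:
  assumes "f \<in> extensional (wr_points {0..<n} S)"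
    and "\<And>x y. x \<in> S \<Longrightarrow> y < n \<Longrightarrow> f (x @ [y]) = wr_elem n S g i (x @ [y])"
  shows "f = wr_elem n S g i"
proof (rule extensionalityI[OF assms(1)])
  show "wr_elem n S g i \<in> extensional (wr_points {0..<n} S)" by (simp add: wr_elem_def)
  fix z assume "z \<in> wr_points {0..<n} S"
  then show "f z = wr_elem n S g i z" by (elim wr_pointsE) (simp add: assms(2))
qed

lemma wr_elem_cong:
  assumes "\<And>x. x \<in> S \<Longrightarrow> g x = g' x" and "\<And>x. x \<in> S \<Longrightarrow> i x mod int n = i' x mod int n"
  shows "wr_elem n S g i = wr_elem n S g' i'"
  unfolding wr_elem_def
proof (rule restrict_ext)
  fix z assume "z \<in> wr_points {0..<n} S"
  then have "butlast z \<in> S" by (simp add: wr_points_iff)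
  then show "g (butlast z) @ [nat ((int (last z) + i (butlast z)) mod int n)] =
             g' (butlast z) @ [nat ((int (last z) + i' (butlast z)) mod int n)]"
    using assms by (metis mod_add_right_eq)
qed

lemma wr_elem_closed:
  assumes "0 < n" "\<And>x. x \<in> S \<Longrightarrow> g x \<in> S" "z \<in> wr_points {0..<n} S"
  shows "wr_elem n S g i z \<in> wr_points {0..<n} S"
  using assms(3) by (elim wr_pointsE) (simp add: assms(1,2) wr_elem_append nat_less_iff)

lemma wr_elem_compose:
  assumes "0 < n" and "\<And>x. x \<in> S \<Longrightarrow> h x \<in> S"
  shows "compose (wr_points {0..<n} S) (wr_elem n S g i) (wr_elem n S h j)
       = wr_elem n S (\<lambda>x. g (h x)) (\<lambda>x. j x + i (h x))"
proof (rule wr_elem_eqI)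
  fix x y assume xy: "x \<in> S" "y < n"
  have "(int (nat ((int y + j x) mod int n)) + i (h x)) mod int n = (int y + (j x + i (h x))) mod int n"
    using assms(1) by (simp add: mod_add_left_eq add.assoc)
  then show "compose (wr_points {0..<n} S) (wr_elem n S g i) (wr_elem n S h j) (x @ [y])
           = wr_elem n S (\<lambda>x. g (h x)) (\<lambda>x. j x + i (h x)) (x @ [y])"
    using xy assms by (simp add: compose_eq wr_elem_append nat_less_iff)
qed simp

lemma wr_elem_id: "wr_elem n S (\<lambda>x. x) (\<lambda>x. 0) = (\<lambda>z\<in>wr_points {0..<n} S. z)"
  by (rule sym, rule wr_elem_eqI) (simp_all add: wr_elem_append)

lemma wr_elem_Bij:
  assumes "0 < n" "g \<in> Bij S"
  shows "wr_elem n S g i \<in> Bij (wr_points {0..<n} S)"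
proof -
  let ?W = "wr_points {0..<n} S" and ?g' = "inv\<^bsub>BijGroup S\<^esub> g"
  let ?f = "wr_elem n S g i" and ?f' = "wr_elem n S ?g' (\<lambda>x. - i (?g' x))"
  have g: "\<And>x. x \<in> S \<Longrightarrow> g x \<in> S" and g': "\<And>x. x \<in> S \<Longrightarrow> ?g' x \<in> S"
    using assms(2) by (simp_all add: Bij_apply_closed Bij_inv_closed)
  have "compose ?W ?f' ?f = wr_elem n S (\<lambda>x. ?g' (g x)) (\<lambda>x. i x + - i (?g' (g x)))"
    by (rule wr_elem_compose[OF assms(1) g])
  also have "\<dots> = wr_elem n S (\<lambda>x. x) (\<lambda>x. 0)"
    by (rule wr_elem_cong) (simp_all add: Bij_inv_apply_left[OF assms(2)])
  finally have left: "compose ?W ?f' ?f = (\<lambda>z\<in>?W. z)" by (simp add: wr_elem_id)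
  have "compose ?W ?f ?f' = wr_elem n S (\<lambda>x. g (?g' x)) (\<lambda>x. - i (?g' x) + i (?g' x))"
    by (rule wr_elem_compose[OF assms(1) g'])
  also have "\<dots> = wr_elem n S (\<lambda>x. x) (\<lambda>x. 0)"
    by (rule wr_elem_cong) (simp_all add: Bij_inv_apply_right[OF assms(2)])
  finally have right: "compose ?W ?f ?f' = (\<lambda>z\<in>?W. z)" by (simp add: wr_elem_id)
  have "bij_betw ?f ?W ?W"
  proof (rule bij_betw_byWitness[where f' = ?f'])
    show "\<forall>z\<in>?W. ?f' (?f z) = z"
    proof
      fix z assume "z \<in> ?W"
      then show "?f' (?f z) = z" using fun_cong[OF left, of z] by (simp add: compose_eq)
    qed
    show "\<forall>z\<in>?W. ?f (?f' z) = z"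
    proof
      fix z assume "z \<in> ?W"
      then show "?f (?f' z) = z" using fun_cong[OF right, of z] by (simp add: compose_eq)
    qed
    show "?f ` ?W \<subseteq> ?W" "?f' ` ?W \<subseteq> ?W" using wr_elem_closed[OF assms(1)] g g' by blast+
  qed
  then show ?thesis by (simp add: Bij_def wr_elem_def)
qed

lemma wr_elem_mult:
  assumes "0 < n" "g \<in> Bij S" "h \<in> Bij S"
  shows "wr_elem n S g i \<otimes>\<^bsub>BijGroup (wr_points {0..<n} S)\<^esub> wr_elem n S h j
       = wr_elem n S (g \<otimes>\<^bsub>BijGroup S\<^esub> h) (\<lambda>x. j x + i (h x))"
proof -
  have "wr_elem n S g i \<otimes>\<^bsub>BijGroup (wr_points {0..<n} S)\<^esub> wr_elem n S h j
      = wr_elem n S (\<lambda>x. g (h x)) (\<lambda>x. j x + i (h x))"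
    using assms by (simp add: BijGroup_mult wr_elem_Bij wr_elem_compose Bij_apply_closed)
  also have "\<dots> = wr_elem n S (g \<otimes>\<^bsub>BijGroup S\<^esub> h) (\<lambda>x. j x + i (h x))"
    using assms(2,3) by (intro wr_elem_cong) (simp_all add: BijGroup_mult compose_eq)
  finally show ?thesis .
qed

lemma wr_elem_one: "\<one>\<^bsub>BijGroup (wr_points {0..<n} S)\<^esub> = wr_elem n S (\<one>\<^bsub>BijGroup S\<^esub>) (\<lambda>x. 0)"
  unfolding BijGroup_one wr_elem_id[symmetric] by (rule wr_elem_cong) simp_all

lemma wr_elem_inv:
  assumes "0 < n" "g \<in> Bij S"
  shows "inv\<^bsub>BijGroup (wr_points {0..<n} S)\<^esub> (wr_elem n S g i)
       = wr_elem n S (inv\<^bsub>BijGroup S\<^esub> g) (\<lambda>x. - i ((inv\<^bsub>BijGroup S\<^esub> g) x))"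
proof (rule group.inv_equality[OF group_BijGroup])
  interpret B: group "BijGroup S" by (rule group_BijGroup)
  let ?g' = "inv\<^bsub>BijGroup S\<^esub> g"
  have g': "?g' \<in> Bij S" using assms(2) by (rule Bij_inv_closed)
  have "wr_elem n S ?g' (\<lambda>x. - i (?g' x)) \<otimes>\<^bsub>BijGroup (wr_points {0..<n} S)\<^esub> wr_elem n S g i
      = wr_elem n S (?g' \<otimes>\<^bsub>BijGroup S\<^esub> g) (\<lambda>x. i x + - i (?g' (g x)))"
    by (rule wr_elem_mult[OF assms(1) g' assms(2)])
  also have "\<dots> = wr_elem n S (\<one>\<^bsub>BijGroup S\<^esub>) (\<lambda>x. 0)"
    using assms(2) by (intro wr_elem_cong) (simp_all add: BijGroup_carrier Bij_inv_apply_left)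
  finally show "wr_elem n S ?g' (\<lambda>x. - i (?g' x)) \<otimes>\<^bsub>BijGroup (wr_points {0..<n} S)\<^esub> wr_elem n S g i
      = \<one>\<^bsub>BijGroup (wr_points {0..<n} S)\<^esub>" by (simp add: wr_elem_one)
qed (simp_all add: BijGroup_carrier wr_elem_Bij Bij_inv_closed assms)

lemma nat_add_mod_int:
  fixes n y :: nat and a :: int
  assumes "0 < n"
  shows "(y + nat (a mod int n)) mod n = nat ((int y + a) mod int n)"
proof -
  have "int ((y + nat (a mod int n)) mod n) = (int y + a mod int n) mod int n"
    using assms by (simp add: zmod_int)
  also have "\<dots> = (int y + a) mod int n" by (simp add: mod_add_right_eq)
  finally show ?thesis by (metis nat_int)
qed

lemma wr_perm_cyc_perms:
  assumes "0 < n"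
  shows "wr_perm (cyc_perms n) {0..<n} G S = wr_group n S G"
proof
  show "wr_perm (cyc_perms n) {0..<n} G S \<subseteq> wr_group n S G"
  proof
    fix s assume "s \<in> wr_perm (cyc_perms n) {0..<n} G S"
    then obtain g f where s: "s = (\<lambda>z\<in>wr_points {0..<n} S. g (butlast z) @ [f (butlast z) (last z)])"
      and g: "g \<in> G" and f: "f \<in> S \<rightarrow> cyc_perms n" unfolding wr_perm_def by blast
    obtain k where k: "\<And>x. x \<in> S \<Longrightarrow> f x = (\<lambda>y\<in>{0..<n}. (y + k x) mod n)"
      using f unfolding cyc_perms_def by (auto simp: Pi_iff) metis
    have "s = wr_elem n S g (\<lambda>x. int (k x))"
      unfolding s wr_elem_def
      by (rule restrict_ext) (simp add: wr_points_iff k nat_mod_distrib nat_add_distrib)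
    with g show "s \<in> wr_group n S G" unfolding wr_group_def by blast
  qed
  show "wr_group n S G \<subseteq> wr_perm (cyc_perms n) {0..<n} G S"
  proof
    fix s assume "s \<in> wr_group n S G"
    then obtain g i where s: "s = wr_elem n S g i" and g: "g \<in> G" unfolding wr_group_def by blast
    define f where "f x = (\<lambda>y\<in>{0..<n}. (y + nat (i x mod int n)) mod n)" for x
    have "f x \<in> cyc_perms n" for x
      unfolding f_def cyc_perms_def using assms by (auto simp: nat_less_iff)
    then have f: "f \<in> S \<rightarrow> cyc_perms n" by blast
    have "s = (\<lambda>z\<in>wr_points {0..<n} S. g (butlast z) @ [f (butlast z) (last z)])"
      unfolding s wr_elem_def
      by (rule restrict_ext) (simp add: wr_points_iff f_def assms nat_add_mod_int)
    with f g show "s \<in> wr_perm (cyc_perms n) {0..<n} G S" unfolding wr_perm_def by blast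
  qed
qed

lemma subgroup_wr_group:
  assumes "0 < n" "subgroup G (BijGroup S)"
  shows "subgroup (wr_group n S G) (BijGroup (wr_points {0..<n} S))"
proof -
  interpret G: subgroup G "BijGroup S" by (rule assms(2))
  have Bij: "g \<in> Bij S" if "g \<in> G" for g using G.subset that by (auto simp: BijGroup_carrier)
  show ?thesis
  proof (rule subgroup.intro)
    show "wr_group n S G \<subseteq> carrier (BijGroup (wr_points {0..<n} S))"
      by (auto simp: wr_group_def BijGroup_carrier assms(1) wr_elem_Bij Bij)
    show "\<one>\<^bsub>BijGroup (wr_points {0..<n} S)\<^esub> \<in> wr_group n S G"
      by (simp add: wr_elem_one wr_elem_in_wr_group)
  next
    fix a b assume "a \<in> wr_group n S G" "b \<in> wr_group n S G"
    then obtain g i h j where "a = wr_elem n S g i" "b = wr_elem n S h j" "g \<in> G" "h \<in> G"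
      unfolding wr_group_def by blast
    then show "a \<otimes>\<^bsub>BijGroup (wr_points {0..<n} S)\<^esub> b \<in> wr_group n S G"
      by (simp add: assms(1) Bij wr_elem_mult wr_elem_in_wr_group)
  next
    fix a assume "a \<in> wr_group n S G"
    then obtain g i where "a = wr_elem n S g i" "g \<in> G" unfolding wr_group_def by blast
    then show "inv\<^bsub>BijGroup (wr_points {0..<n} S)\<^esub> a \<in> wr_group n S G"
      by (simp add: assms(1) Bij wr_elem_inv wr_elem_in_wr_group)
  qed
qed

section \<open>Commutators in \<open>C\<^sub>n \<wr> G\<close>\<close>

lemma wr_elem_commutator:
  fixes u v :: "nat list \<Rightarrow> int"
  assumes "0 < n" "a \<in> Bij S" "b \<in> Bij S"
  defines "W \<equiv> BijGroup (wr_points {0..<n} S)" and "B \<equiv> BijGroup S"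
    and "w \<equiv> \<lambda>y. u (b y) - u y + (v y - v (a y))"
  shows "wr_elem n S a u \<otimes>\<^bsub>W\<^esub> wr_elem n S b v \<otimes>\<^bsub>W\<^esub> inv\<^bsub>W\<^esub> (wr_elem n S a u) \<otimes>\<^bsub>W\<^esub> inv\<^bsub>W\<^esub> (wr_elem n S b v)
       = wr_elem n S (a \<otimes>\<^bsub>B\<^esub> b \<otimes>\<^bsub>B\<^esub> inv\<^bsub>B\<^esub> a \<otimes>\<^bsub>B\<^esub> inv\<^bsub>B\<^esub> b) (\<lambda>x. w ((inv\<^bsub>B\<^esub> a) ((inv\<^bsub>B\<^esub> b) x)))"
proof -
  interpret B: group B unfolding B_def by (rule group_BijGroup)
  let ?a' = "inv\<^bsub>B\<^esub> a" and ?b' = "inv\<^bsub>B\<^esub> b"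
  have Bij: "a \<in> Bij S" "b \<in> Bij S" "?a' \<in> Bij S" "?b' \<in> Bij S"
    using assms(2,3) by (simp_all add: B_def Bij_inv_closed)
  have "a \<otimes>\<^bsub>B\<^esub> b \<in> Bij S" "a \<otimes>\<^bsub>B\<^esub> b \<otimes>\<^bsub>B\<^esub> ?a' \<in> Bij S"
    using Bij B.m_closed unfolding B_def BijGroup_carrier by blast+
  then have "wr_elem n S a u \<otimes>\<^bsub>W\<^esub> wr_elem n S b v \<otimes>\<^bsub>W\<^esub> inv\<^bsub>W\<^esub> (wr_elem n S a u) \<otimes>\<^bsub>W\<^esub> inv\<^bsub>W\<^esub> (wr_elem n S b v)
      = wr_elem n S (a \<otimes>\<^bsub>B\<^esub> b \<otimes>\<^bsub>B\<^esub> ?a' \<otimes>\<^bsub>B\<^esub> ?b')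
          (\<lambda>x. - v (?b' x) + (- u (?a' (?b' x)) + (v (?a' (?b' x)) + u (b (?a' (?b' x))))))"
    using Bij by (simp add: W_def B_def assms(1) wr_elem_inv wr_elem_mult)
  also have "\<dots> = wr_elem n S (a \<otimes>\<^bsub>B\<^esub> b \<otimes>\<^bsub>B\<^esub> ?a' \<otimes>\<^bsub>B\<^esub> ?b') (\<lambda>x. w (?a' (?b' x)))"
  proof (rule wr_elem_cong)
    fix x assume "x \<in> S"
    then have "a (?a' (?b' x)) = ?b' x"
      using Bij by (simp add: B_def Bij_apply_closed Bij_inv_apply_right)
    then show "(- v (?b' x) + (- u (?a' (?b' x)) + (v (?a' (?b' x)) + u (b (?a' (?b' x)))))) mod int n
             = w (?a' (?b' x)) mod int n" by (simp add: w_def algebra_simps)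
  qed simp
  finally show ?thesis .
qed

lemma sum_commutator_base:
  fixes u v :: "'a \<Rightarrow> int"
  assumes "a \<in> Bij S" "b \<in> Bij S"
  defines "w \<equiv> \<lambda>y. u (b y) - u y + (v y - v (a y))"
  shows "(\<Sum>x\<in>S. w ((inv\<^bsub>BijGroup S\<^esub> a) ((inv\<^bsub>BijGroup S\<^esub> b) x))) = 0"
proof -
  have "(\<Sum>x\<in>S. w ((inv\<^bsub>BijGroup S\<^esub> a) ((inv\<^bsub>BijGroup S\<^esub> b) x))) = (\<Sum>y\<in>S. w y)"
    using assms(1,2) by (simp add: Bij_inv_closed sum_Bij_reindex[where f = "\<lambda>z. w (_ z)"] sum_Bij_reindex)
  also have "\<dots> = 0"
    using sum_Bij_reindex[OF assms(2), of u] sum_Bij_reindex[OF assms(1), of v]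
    by (simp add: w_def sum.distrib sum_subtractf)
  finally show ?thesis .
qed

lemma derived_set_wr_groupE:
  assumes "0 < n" "subgroup G (BijGroup S)"
    and "h \<in> derived_set (BijGroup (wr_points {0..<n} S)) (wr_group n S G)"
  obtains g i where "h = wr_elem n S g i" "g \<in> derived_set (BijGroup S) G" "(\<Sum>x\<in>S. i x) = 0"
proof -
  have Bij: "g \<in> Bij S" if "g \<in> G" for g
    using subgroup.subset[OF assms(2)] that by (auto simp: BijGroup_carrier)
  obtain a u b v where a: "a \<in> G" and b: "b \<in> G" and h:
    "h = wr_elem n S a u \<otimes>\<^bsub>BijGroup (wr_points {0..<n} S)\<^esub> wr_elem n S b v
         \<otimes>\<^bsub>BijGroup (wr_points {0..<n} S)\<^esub> inv\<^bsub>BijGroup (wr_points {0..<n} S)\<^esub> (wr_elem n S a u)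
         \<otimes>\<^bsub>BijGroup (wr_points {0..<n} S)\<^esub> inv\<^bsub>BijGroup (wr_points {0..<n} S)\<^esub> (wr_elem n S b v)"
    using assms(3) unfolding wr_group_def by blast
  show thesis
  proof
    show "h = wr_elem n S (a \<otimes>\<^bsub>BijGroup S\<^esub> b \<otimes>\<^bsub>BijGroup S\<^esub> inv\<^bsub>BijGroup S\<^esub> a \<otimes>\<^bsub>BijGroup S\<^esub> inv\<^bsub>BijGroup S\<^esub> b)
      (\<lambda>x. (\<lambda>y. u (b y) - u y + (v y - v (a y))) ((inv\<^bsub>BijGroup S\<^esub> a) ((inv\<^bsub>BijGroup S\<^esub> b) x)))"
      unfolding h using wr_elem_commutator[OF assms(1) Bij[OF a] Bij[OF b]] by simp
    show "a \<otimes>\<^bsub>BijGroup S\<^esub> b \<otimes>\<^bsub>BijGroup S\<^esub> inv\<^bsub>BijGroup S\<^esub> a \<otimes>\<^bsub>BijGroup S\<^esub> inv\<^bsub>BijGroup S\<^esub> b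
          \<in> derived_set (BijGroup S) G" using a b by blast
  qed (use sum_commutator_base[OF Bij[OF a] Bij[OF b]] in simp)
qed

lemma derived_wr_groupE:
  assumes "0 < n" "subgroup G (BijGroup S)"
    and "\<sigma> \<in> derived (BijGroup (wr_points {0..<n} S)) (wr_group n S G)"
  obtains g i where "\<sigma> = wr_elem n S g i" "g \<in> derived (BijGroup S) G" "int n dvd (\<Sum>x\<in>S. i x)"
proof -
  interpret B: group "BijGroup S" by (rule group_BijGroup)
  have Bij: "g \<in> Bij S" if "g \<in> derived (BijGroup S) G" for g
    using B.derived_incl[OF _ assms(2)] subgroup.subset[OF assms(2)] that by (auto simp: BijGroup_carrier)
  have "\<exists>g i. \<sigma> = wr_elem n S g i \<and> g \<in> derived (BijGroup S) G \<and> int n dvd (\<Sum>x\<in>S. i x)"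
    using assms(3) unfolding derived_def
  proof (induction rule: generate.induct)
    case one
    have "\<one>\<^bsub>BijGroup S\<^esub> \<in> generate (BijGroup S) (derived_set (BijGroup S) G)" by (rule generate.one)
    then show ?case unfolding derived_def wr_elem_one by fastforce
  next
    case (incl h)
    then obtain g i where "h = wr_elem n S g i" "g \<in> derived_set (BijGroup S) G" "(\<Sum>x\<in>S. i x) = 0"
      by (rule derived_set_wr_groupE[OF assms(1,2)])
    then show ?case unfolding derived_def by (fastforce intro: generate.incl)
  next
    case (inv h)
    then obtain g i where h: "h = wr_elem n S g i" and g: "g \<in> derived_set (BijGroup S) G"
      and i: "(\<Sum>x\<in>S. i x) = 0"
      by (rule derived_set_wr_groupE[OF assms(1,2)])
    then have "g \<in> Bij S" using Bij unfolding derived_def by (blast intro: generate.incl)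
    then have "inv\<^bsub>BijGroup (wr_points {0..<n} S)\<^esub> h
        = wr_elem n S (inv\<^bsub>BijGroup S\<^esub> g) (\<lambda>x. - i ((inv\<^bsub>BijGroup S\<^esub> g) x))"
      and "(\<Sum>x\<in>S. - i ((inv\<^bsub>BijGroup S\<^esub> g) x)) = 0"
      using i by (simp_all add: h assms(1) wr_elem_inv sum_Bij_reindex Bij_inv_closed sum_negf)
    moreover have "inv\<^bsub>BijGroup S\<^esub> g \<in> derived (BijGroup S) G"
      using g unfolding derived_def by (rule generate.inv)
    ultimately show ?case unfolding derived_def by fastforce
  next
    case (eng h1 h2)
    then obtain g i k j where h: "h1 = wr_elem n S g i" "h2 = wr_elem n S k j"
      and gk: "g \<in> derived (BijGroup S) G" "k \<in> derived (BijGroup S) G"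
      and ij: "int n dvd (\<Sum>x\<in>S. i x)" "int n dvd (\<Sum>x\<in>S. j x)"
      unfolding derived_def by blast
    have "h1 \<otimes>\<^bsub>BijGroup (wr_points {0..<n} S)\<^esub> h2
        = wr_elem n S (g \<otimes>\<^bsub>BijGroup S\<^esub> k) (\<lambda>x. j x + i (k x))"
      using gk by (simp add: h assms(1) Bij wr_elem_mult)
    moreover have "g \<otimes>\<^bsub>BijGroup S\<^esub> k \<in> derived (BijGroup S) G"
      using gk unfolding derived_def by (rule generate.eng)
    moreover have "(\<Sum>x\<in>S. j x + i (k x)) = (\<Sum>x\<in>S. j x) + (\<Sum>x\<in>S. i x)"
      using gk by (simp add: Bij sum.distrib sum_Bij_reindex)
    ultimately show ?case using ij unfolding derived_def by fastforce
  qed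
  then show thesis using that by blast
qed

section \<open>Commutators with a full cycle\<close>

lemma bij_betw_wr_points_enum:
  assumes "bij_betw e {..<N} S"
  shows "bij_betw (\<lambda>k. e (k mod N) @ [k div N mod n]) {..<N * n} (wr_points {0..<n} S)"
proof (rule bij_betw_imageI)
  have e_inj: "inj_on e {..<N}" and S: "S = e ` {..<N}"
    using assms by (simp_all add: bij_betw_def)
  show "inj_on (\<lambda>k. e (k mod N) @ [k div N mod n]) {..<N * n}"
  proof (rule inj_onI)
    fix k k' assume k: "k \<in> {..<N * n}" and k': "k' \<in> {..<N * n}"
      and eq: "e (k mod N) @ [k div N mod n] = e (k' mod N) @ [k' div N mod n]"
    have "0 < N" using k by (cases N) simp_all
    moreover have "k div N < n" "k' div N < n"
      using k k' by (simp_all add: less_mult_imp_div_less mult.commute)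
    ultimately have "k mod N = k' mod N" "k div N = k' div N"
      using eq inj_onD[OF e_inj] by auto
    then show "k = k'" by (metis div_mult_mod_eq)
  qed
  show "(\<lambda>k. e (k mod N) @ [k div N mod n]) ` {..<N * n} = wr_points {0..<n} S"
  proof (intro equalityI subsetI)
    fix z assume "z \<in> (\<lambda>k. e (k mod N) @ [k div N mod n]) ` {..<N * n}"
    then obtain k where "z = e (k mod N) @ [k div N mod n]" "k < N * n" by blast
    moreover from this have "0 < N" "0 < n" by (cases N; cases n; simp)+
    ultimately show "z \<in> wr_points {0..<n} S" using S by simp
  next
    fix z assume "z \<in> wr_points {0..<n} S"
    then obtain j y where z: "z = e j @ [y]" "j < N" "y < n"
      using S by (auto elim: wr_pointsE)
    have "j + N * y < N * Suc y" using z(2) by simp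
    also have "\<dots> \<le> N * n" using z(3) by (intro mult_le_mono2) simp
    finally have "j + N * y \<in> {..<N * n}" by simp
    moreover have "z = e ((j + N * y) mod N) @ [(j + N * y) div N mod n]" using z by simp
    ultimately show "z \<in> (\<lambda>k. e (k mod N) @ [k div N mod n]) ` {..<N * n}" by blast
  qed
qed

text \<open>The lift runs through the blocks \<open>S \<times> {y}\<close> one after the other: the base value \<open>1\<close>
  at the last point of the cycle of \<open>b\<close> moves on to the next block.\<close>
lemma full_cycle_on_wr_elem:
  assumes "full_cycle_on S b" "0 < n"
  shows "\<exists>v. full_cycle_on (wr_points {0..<n} S) (wr_elem n S b v)"
proof -
  obtain e N where N: "0 < N" and e: "bij_betw e {..<N} S" and cyc: "\<forall>k<N. b (e k) = e (Suc k mod N)"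
    using assms(1) unfolding full_cycle_on_def by blast
  define v where "v x = (if x = e (N - 1) then 1 else 0 :: int)" for x
  define E where "E k = e (k mod N) @ [k div N mod n]" for k
  have E_periodic: "E (k mod (N * n)) = E k" for k
    using N by (simp add: E_def mod_mult2_eq mod_mod_cancel)
  have E_step: "wr_elem n S b v (E k) = E (Suc k)" for k
  proof -
    define r q where "r = k mod N" and "q = k div N"
    have r: "r < N" "e r \<in> S" using N e by (auto simp: r_def bij_betw_def)
    have "e r = e (N - 1) \<longleftrightarrow> r = N - 1"
      using r(1) N inj_onD[OF bij_betw_imp_inj_on[OF e], of r "N - 1"] by auto
    also have "\<dots> \<longleftrightarrow> Suc k mod N = 0"
      using r(1) by (auto simp: r_def mod_Suc)
    finally have last: "e r = e (N - 1) \<longleftrightarrow> Suc k mod N = 0" .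
    have "wr_elem n S b v (E k) = e (Suc r mod N) @ [nat ((int (q mod n) + v (e r)) mod int n)]"
      using r cyc assms(2) by (simp add: E_def r_def q_def wr_elem_append)
    also have "nat ((int (q mod n) + v (e r)) mod int n) = Suc k div N mod n"
    proof (cases "Suc k mod N = 0")
      case True
      have "(int (q mod n) + 1) mod int n = int (Suc q mod n)"
        by (simp add: zmod_int mod_add_right_eq add.commute)
      then show ?thesis using True last by (simp add: v_def q_def div_Suc)
    next
      case False
      then show ?thesis using last by (simp add: v_def q_def div_Suc flip: zmod_int)
    qed
    finally show ?thesis by (simp add: E_def r_def mod_Suc_eq)
  qed
  have "full_cycle_on (wr_points {0..<n} S) (wr_elem n S b v)"
    unfolding full_cycle_on_def
    using bij_betw_wr_points_enum[OF e, of n] N assms(2) E_step E_periodic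
    by (intro exI[of _ E] exI[of _ "N * n"]) (simp add: E_def[abs_def])
  then show ?thesis by blast
qed

definition full_cycle_commutators :: "'a set \<Rightarrow> ('a \<Rightarrow> 'a) set \<Rightarrow> bool" where
  "full_cycle_commutators S G \<longleftrightarrow>
     (\<forall>\<sigma>\<in>derived (BijGroup S) G. \<exists>a\<in>G. \<exists>b\<in>G. full_cycle_on S b \<and>
        \<sigma> = a \<otimes>\<^bsub>BijGroup S\<^esub> b \<otimes>\<^bsub>BijGroup S\<^esub> inv\<^bsub>BijGroup S\<^esub> a \<otimes>\<^bsub>BijGroup S\<^esub> inv\<^bsub>BijGroup S\<^esub> b)"

lemma full_cycle_commutators_ex_full_cycle:
  "full_cycle_commutators S G \<Longrightarrow> \<exists>b\<in>G. full_cycle_on S b"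
  using generate.one[of "BijGroup S"] unfolding full_cycle_commutators_def derived_def by blast

lemma commutator_base_solvable:
  fixes i v :: "'a \<Rightarrow> int"
  assumes a: "a \<in> Bij S" and b: "b \<in> Bij S" "full_cycle_on S b" and i: "n dvd (\<Sum>x\<in>S. i x)"
  shows "\<exists>u. \<forall>x\<in>S. (\<lambda>y. u (b y) - u y + (v y - v (a y)))
                        ((inv\<^bsub>BijGroup S\<^esub> a) ((inv\<^bsub>BijGroup S\<^esub> b) x)) mod n = i x mod n"
proof -
  define h where "h y = i (b (a y)) - v y + v (a y)" for y
  have "(\<Sum>y\<in>S. h y) = (\<Sum>y\<in>S. i y)"
    using sum_Bij_reindex[OF a, of "\<lambda>y. i (b y)"] sum_Bij_reindex[OF b(1), of i] sum_Bij_reindex[OF a, of v]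
    by (simp add: h_def sum.distrib sum_subtractf)
  then obtain u where u: "\<And>y. y \<in> S \<Longrightarrow> (u (b y) - u y) mod n = h y mod n"
    using full_cycle_on_coboundary[OF b(2), of n h] i by auto
  have "(\<lambda>y. u (b y) - u y + (v y - v (a y))) ((inv\<^bsub>BijGroup S\<^esub> a) ((inv\<^bsub>BijGroup S\<^esub> b) x)) mod n
        = i x mod n" if x: "x \<in> S" for x
  proof -
    define y where "y = (inv\<^bsub>BijGroup S\<^esub> a) ((inv\<^bsub>BijGroup S\<^esub> b) x)"
    have y: "y \<in> S" and x_eq: "b (a y) = x"
      using x a b(1) by (simp_all add: y_def Bij_apply_closed Bij_inv_closed Bij_inv_apply_right)
    have "(u (b y) - u y + (v y - v (a y))) mod n = (h y + (v y - v (a y))) mod n"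
      using u[OF y] by (metis mod_add_left_eq)
    then show ?thesis by (simp add: y_def[symmetric] h_def x_eq)
  qed
  then show ?thesis by blast
qed

lemma full_cycle_commutators_wr_group:
  assumes n: "0 < n" and G: "subgroup G (BijGroup S)" and comm: "full_cycle_commutators S G"
  shows "full_cycle_commutators (wr_points {0..<n} S) (wr_group n S G)"
  unfolding full_cycle_commutators_def
proof
  let ?W = "BijGroup (wr_points {0..<n} S)" and ?B = "BijGroup S"
  have Bij: "g \<in> Bij S" if "g \<in> G" for g
    using subgroup.subset[OF G] that by (auto simp: BijGroup_carrier)
  fix \<sigma> assume "\<sigma> \<in> derived ?W (wr_group n S G)"
  then obtain g i where \<sigma>: "\<sigma> = wr_elem n S g i" and g: "g \<in> derived ?B G"
    and i: "int n dvd (\<Sum>x\<in>S. i x)"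
    by (rule derived_wr_groupE[OF n G])
  obtain a b where a: "a \<in> G" and b: "b \<in> G" and b_cycle: "full_cycle_on S b"
    and g_comm: "g = a \<otimes>\<^bsub>?B\<^esub> b \<otimes>\<^bsub>?B\<^esub> inv\<^bsub>?B\<^esub> a \<otimes>\<^bsub>?B\<^esub> inv\<^bsub>?B\<^esub> b"
    using comm g unfolding full_cycle_commutators_def by blast
  obtain v where v: "full_cycle_on (wr_points {0..<n} S) (wr_elem n S b v)"
    using full_cycle_on_wr_elem[OF b_cycle n] by blast
  obtain u where u: "\<forall>x\<in>S. (\<lambda>y. u (b y) - u y + (v y - v (a y)))
                                  ((inv\<^bsub>?B\<^esub> a) ((inv\<^bsub>?B\<^esub> b) x)) mod int n = i x mod int n"
    using commutator_base_solvable[OF Bij[OF a] Bij[OF b] b_cycle i] by blast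
  have "\<sigma> = wr_elem n S a u \<otimes>\<^bsub>?W\<^esub> wr_elem n S b v \<otimes>\<^bsub>?W\<^esub> inv\<^bsub>?W\<^esub> (wr_elem n S a u)
                \<otimes>\<^bsub>?W\<^esub> inv\<^bsub>?W\<^esub> (wr_elem n S b v)"
    unfolding wr_elem_commutator[OF n Bij[OF a] Bij[OF b]] \<sigma> g_comm
    by (rule wr_elem_cong) (simp_all add: u)
  then show "\<exists>A\<in>wr_group n S G. \<exists>B\<in>wr_group n S G. full_cycle_on (wr_points {0..<n} S) B \<and>
               \<sigma> = A \<otimes>\<^bsub>?W\<^esub> B \<otimes>\<^bsub>?W\<^esub> inv\<^bsub>?W\<^esub> A \<otimes>\<^bsub>?W\<^esub> inv\<^bsub>?W\<^esub> B"
    using v a b by (blast intro: wr_elem_in_wr_group)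
qed

lemma wr_elem_ne_one:
  assumes "0 < n" "x \<in> S" "i x mod int n \<noteq> 0"
  shows "wr_elem n S g i \<noteq> \<one>\<^bsub>BijGroup (wr_points {0..<n} S)\<^esub>"
proof
  assume "wr_elem n S g i = \<one>\<^bsub>BijGroup (wr_points {0..<n} S)\<^esub>"
  then have "wr_elem n S g i (x @ [0]) = x @ [0]" using assms(1,2) by (simp add: BijGroup_one)
  then have "i x mod int n \<le> 0" using assms(1,2) by (simp add: wr_elem_append)
  moreover have "0 \<le> i x mod int n" using assms(1) by simp
  ultimately show False using assms(3) by simp
qed

lemma derived_wr_group_nontrivial:
  assumes n: "2 \<le> n" and G: "subgroup G (BijGroup S)" and comm: "full_cycle_commutators S G"
    and x: "x \<in> S" "x' \<in> S" "x \<noteq> x'"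
  shows "derived (BijGroup (wr_points {0..<n} S)) (wr_group n S G) \<noteq> {\<one>\<^bsub>BijGroup (wr_points {0..<n} S)\<^esub>}"
proof -
  interpret B: group "BijGroup S" by (rule group_BijGroup)
  let ?W = "BijGroup (wr_points {0..<n} S)" and ?B = "BijGroup S"
  have n0: "0 < n" using n by simp
  obtain b where b: "b \<in> G" and b_cycle: "full_cycle_on S b"
    using full_cycle_commutators_ex_full_cycle[OF comm] by blast
  have b_Bij: "b \<in> Bij S" using subgroup.subset[OF G] b by (auto simp: BijGroup_carrier)
  have bx: "b x \<noteq> x" using full_cycle_on_fixpoint[OF b_cycle x(1)] x by blast
  have one: "\<one>\<^bsub>?B\<^esub> \<in> G" "\<one>\<^bsub>?B\<^esub> \<in> Bij S" "inv\<^bsub>?B\<^esub> \<one>\<^bsub>?B\<^esub> = \<one>\<^bsub>?B\<^esub>"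
    using subgroup.one_closed[OF G] by (simp_all add: BijGroup_carrier[symmetric])
  define \<delta> where "\<delta> y = (if y = b x then 1 else 0 :: int)" for y
  define \<tau> where "\<tau> = wr_elem n S \<one>\<^bsub>?B\<^esub> \<delta> \<otimes>\<^bsub>?W\<^esub> wr_elem n S b (\<lambda>_. 0)
     \<otimes>\<^bsub>?W\<^esub> inv\<^bsub>?W\<^esub> (wr_elem n S \<one>\<^bsub>?B\<^esub> \<delta>) \<otimes>\<^bsub>?W\<^esub> inv\<^bsub>?W\<^esub> (wr_elem n S b (\<lambda>_. 0))"
  have "\<tau> \<in> derived ?W (wr_group n S G)"
    unfolding \<tau>_def derived_def using one(1) b
    by (blast intro: generate.incl wr_elem_in_wr_group)
  moreover have "\<tau> \<noteq> \<one>\<^bsub>?W\<^esub>"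
  proof -
    have "(inv\<^bsub>?B\<^esub> \<one>\<^bsub>?B\<^esub>) ((inv\<^bsub>?B\<^esub> b) (b x)) = x"
      using x(1) b_Bij by (simp add: one(3) Bij_inv_apply_left) (simp add: BijGroup_one)
    then show ?thesis
      unfolding \<tau>_def wr_elem_commutator[OF n0 one(2) b_Bij]
      using n x(1) b_Bij bx by (intro wr_elem_ne_one[where x = "b x"]) (simp_all add: \<delta>_def Bij_apply_closed)
  qed
  ultimately show ?thesis by blast
qed

lemma full_cycle_commutators_singleton: "full_cycle_commutators {x} {\<one>\<^bsub>BijGroup {x}\<^esub>}"
proof -
  interpret B: group "BijGroup {x}" by (rule group_BijGroup)
  have "derived (BijGroup {x}) {\<one>\<^bsub>BijGroup {x}\<^esub>} \<subseteq> {\<one>\<^bsub>BijGroup {x}\<^esub>}"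
    using B.derived_incl[OF order_refl B.triv_subgroup] .
  moreover have "full_cycle_on {x} \<one>\<^bsub>BijGroup {x}\<^esub>"
    unfolding full_cycle_on_def by (intro exI[of _ "\<lambda>_. x"] exI[of _ 1]) (auto simp: bij_betw_def BijGroup_one lessThan_Suc)
  ultimately show ?thesis unfolding full_cycle_commutators_def by auto
qed

section \<open>Iterated wreath products\<close>

lemma wr_aux_Cons:
  "0 < p \<Longrightarrow> wr_aux (p # qs) =
     (wr_group p (snd (wr_aux qs)) (fst (wr_aux qs)), wr_points {0..<p} (snd (wr_aux qs)))"
  by (simp add: case_prod_beta wr_perm_cyc_perms)

lemma wr_aux_full_cycle_commutators:
  assumes "\<forall>q\<in>set qs. 0 < q"
  shows "subgroup (fst (wr_aux qs)) (BijGroup (snd (wr_aux qs)))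
         \<and> full_cycle_commutators (snd (wr_aux qs)) (fst (wr_aux qs))"
  using assms
proof (induction qs)
  case Nil
  have "wr_aux [] = ({\<one>\<^bsub>BijGroup {[]}\<^esub>}, {[]})" by (simp add: BijGroup_one)
  then show ?case
    using group.triv_subgroup[OF group_BijGroup, of "{[]}"] full_cycle_commutators_singleton[of "[]"]
    by simp
next
  case (Cons p qs)
  then show ?case
    by (simp add: wr_aux_Cons subgroup_wr_group full_cycle_commutators_wr_group del: wr_aux.simps)
qed

lemma commutator_width_full_cycle_commutators:
  assumes "subgroup G (BijGroup S)" "full_cycle_commutators S G"
    and "derived (BijGroup S) G \<noteq> {\<one>\<^bsub>BijGroup S\<^esub>}"
  shows "commutator_width (BijGroup S\<lparr>carrier := G\<rparr>) = 1"
proof -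
  interpret B: group "BijGroup S" by (rule group_BijGroup)
  interpret H: group "BijGroup S\<lparr>carrier := G\<rparr>" by (rule B.subgroup_imp_group[OF assms(1)])
  have derived: "derived (BijGroup S\<lparr>carrier := G\<rparr>) (carrier (BijGroup S\<lparr>carrier := G\<rparr>))
      = derived (BijGroup S) G"
    using B.derived_consistent[OF order_refl assms(1)] by simp
  have derived_set: "derived_set (BijGroup S\<lparr>carrier := G\<rparr>) (carrier (BijGroup S\<lparr>carrier := G\<rparr>))
      = derived_set (BijGroup S) G"
    using B.derived_set_consistent[OF order_refl assms(1)] by simp
  show ?thesis
  proof (rule H.commutator_width_eq_1)
    show "derived (BijGroup S\<lparr>carrier := G\<rparr>) (carrier (BijGroup S\<lparr>carrier := G\<rparr>))
        \<subseteq> derived_set (BijGroup S\<lparr>carrier := G\<rparr>) (carrier (BijGroup S\<lparr>carrier := G\<rparr>))"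
      unfolding derived derived_set using assms(2) unfolding full_cycle_commutators_def by blast
  qed (use assms(3) derived in simp)
qed

theorem mainTheorem6:
  fixes ps :: "nat list"
  assumes "length ps \<ge> 2"
    and "\<forall>p \<in> set ps. p \<ge> 2"
  shows "commutator_width (iter_wreath ps) = 1"
proof -
  have "\<exists>n m qs. xs = n # m # qs" if "2 \<le> length xs" for xs :: "nat list"
    using that by (cases xs; cases "tl xs") auto
  moreover have "2 \<le> length (rev ps)" using assms(1) by simp
  ultimately obtain n m qs where ps: "rev ps = n # m # qs" by blast
  have "\<forall>p\<in>set (rev ps). 2 \<le> p" using assms(2) by simp
  then have n: "2 \<le> n" and m: "2 \<le> m" and qs: "\<forall>q\<in>set qs. 0 < q"
    by (auto simp: ps)
  define S G where "S = snd (wr_aux qs)" and "G = fst (wr_aux qs)"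
  define S' G' where "S' = wr_points {0..<m} S" and "G' = wr_group m S G"
  have G: "subgroup G (BijGroup S)" "full_cycle_commutators S G"
    using wr_aux_full_cycle_commutators[OF qs] by (simp_all add: S_def G_def)
  have G': "subgroup G' (BijGroup S')" "full_cycle_commutators S' G'"
    using m G by (simp_all add: S'_def G'_def subgroup_wr_group full_cycle_commutators_wr_group)
  obtain x where "x \<in> S"
    using full_cycle_commutators_ex_full_cycle[OF G(2)] full_cycle_on_nonempty by blast
  then have x: "x @ [0] \<in> S'" "x @ [1] \<in> S'" using m by (simp_all add: S'_def)
  have "iter_wreath ps = BijGroup (wr_points {0..<n} S')\<lparr>carrier := wr_group n S' G'\<rparr>"
    using m n by (simp add: iter_wreath_def ps wr_aux_Cons S'_def G'_def S_def G_def del: wr_aux.simps)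
  also have "commutator_width \<dots> = 1"
    using n G' derived_wr_group_nontrivial[OF n G' x]
    by (intro commutator_width_full_cycle_commutators subgroup_wr_group full_cycle_commutators_wr_group)
      simp_all
  finally show ?thesis .
qed

end
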